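(* Let $r\in\mathbb{N}_0$, $m\in\mathbb{N}$ with $m\ge r+1$, $k:=m-r$, and let $x_0\le x_1\le\dots\le x_m$ be real numbers with $x_j<x_{j+r+1}$ for all $0\le j\le m-r-1$; put $d:=2(x_m-x_0)$. Let $(p,q)\in\mathcal{Q}_{m,r}$ satisfy $q-p+2\le m$. If $\varphi,\omega\in\Phi$ satisfy \[ \varphi(t)\le t^{k-1}\int_t^{d}u^{-k}\omega(u)\,du,\qquad t\in(0,d/2], \] then \[ \Lambda_{p,q,r}(x_0,\dots,x_m;\varphi)\le 2^{k^2}\Lambda_r(x_0,\dots,x_m;\omega). \]
   Context: $\Phi$ denotes the set of nondecreasing functions $\varphi\in C[0,\infty]$ with $\varphi(0)=0$. For ordered $y_0\le\dots\le y_n$: $\mathcal{Q}_{n,r}:=\{(p,q):0\le p,q\le n,\ q-p\ge r+1\}$, $y_{-1}:=y_0-(y_n-y_0)$, $y_{n+1}:=y_n+(y_n-y_0)$, $d(p,q):=\min\{y_{q+1}-y_p,y_q-y_{p-1}\}$, and for $\varphi\in\Phi$, $\Lambda_{p,q,r}(y_0,\dots,y_n;\varphi):=\frac{\int_{y_q-y_p}^{d(p,q)}u^{p+r-q-1}\varphi(u)du}{\prod_{i=0}^{p-1}(y_q-y_i)\prod_{i=q+1}^{n}(y_i-y_p)}$ (empty products $=1$), $\Lambda_r(y_0,\dots,y_n;\varphi):=\max_{(p,q)\in\mathcal{Q}_{n,r}}\Lambda_{p,q,r}(y_0,\dots,y_n;\varphi)$. *)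

theory Defs
  imports "HOL-Analysis.Analysis"
begin

definition Phi :: "(real \<Rightarrow> real) set" where
  "Phi = {\<phi>. mono_on {0..} \<phi> \<and> continuous_on {0..} \<phi> \<and> \<phi> 0 = 0}"

definition Qset :: "nat \<Rightarrow> nat \<Rightarrow> (nat \<times> nat) set" where
  "Qset n r = {(p, q). p \<le> n \<and> q \<le> n \<and> q \<ge> p + r + 1}"

definition yprev :: "(nat \<Rightarrow> real) \<Rightarrow> nat \<Rightarrow> nat \<Rightarrow> real" where
  "yprev y n p = (if p = 0 then y 0 - (y n - y 0) else y (p - 1))"

definition ynext :: "(nat \<Rightarrow> real) \<Rightarrow> nat \<Rightarrow> nat \<Rightarrow> real" where
  "ynext y n q = (if q \<ge> n then y n + (y n - y 0) else y (q + 1))"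

definition dpq :: "(nat \<Rightarrow> real) \<Rightarrow> nat \<Rightarrow> nat \<Rightarrow> nat \<Rightarrow> real" where
  "dpq y n p q = min (ynext y n q - y p) (y q - yprev y n p)"

definition Lambda_pqr ::
  "nat \<Rightarrow> nat \<Rightarrow> nat \<Rightarrow> (nat \<Rightarrow> real) \<Rightarrow> nat \<Rightarrow> (real \<Rightarrow> real) \<Rightarrow> real" where
  "Lambda_pqr p q r y n \<phi> =
     integral {y q - y p .. dpq y n p q}
       (\<lambda>u. u powi (int p + int r - int q - 1) * \<phi> u)
     / ((\<Prod>i<p. (y q - y i)) * (\<Prod>i\<in>{q+1..n}. (y i - y p)))"

definition Lambda_r :: "nat \<Rightarrow> (nat \<Rightarrow> real) \<Rightarrow> nat \<Rightarrow> (real \<Rightarrow> real) \<Rightarrow> real" where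
  "Lambda_r r y n \<phi> = Max ((\<lambda>(p, q). Lambda_pqr p q r y n \<phi>) ` Qset n r)"

end

theory Submission
  imports Defs
begin

text \<open>
  Write k = m - r, N = q - p - r + 1, e = k - N, a = x(q) - x(p), D = d(p,q) and P for the
  denominator of Lambda_{p,q,r}, so that P Lambda_{p,q,r}(phi) is the integral of phi(u) / u^N
  over [a, D]. Inserting the hypothesis on phi and integrating by parts bounds this by
  D^e int_D^d omega(v) / v^k dv + int_a^D omega(v) / v^N dv, and the second term is
  P Lambda_{p,q,r}(omega). The interval [D, d] is covered by the intervals [x(q') - x(p'), d(p',q')]
  of the at most k^2 pairs [p',q'] properly containing [p,q], and on each of them
  D^e v^(q'-p'-r+1) P' <= 2^k P v^k, because every factor of the shorter denominator P' is at most
  2 (x(q') - x(p')) / D times a factor of P, while the factors of P missing from P' are all at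
  least D. Hence the first term is at most k^2 2^k P Lambda_r(omega), and k^2 2^k + 1 <= 2^(k^2)
  because k >= 3.
\<close>

lemma Phi_nonneg: "\<psi> \<in> Phi \<Longrightarrow> 0 \<le> t \<Longrightarrow> 0 \<le> \<psi> t"
  unfolding Phi_def by (auto simp: mono_on_def) (metis atLeast_iff order_refl)

lemma Phi_continuous_on: "\<psi> \<in> Phi \<Longrightarrow> S \<subseteq> {0..} \<Longrightarrow> continuous_on S \<psi>"
  unfolding Phi_def by (auto intro: continuous_on_subset)

lemma Phi_divide_power_continuous_on:
  assumes "\<psi> \<in> Phi" "S \<subseteq> {0<..}"
  shows "continuous_on S (\<lambda>v. \<psi> v / v ^ n)"
proof -
  have "continuous_on S \<psi>"
    using assms by (intro Phi_continuous_on) auto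
  with assms(2) show ?thesis
    by (auto intro!: continuous_intros)
qed

lemma Phi_divide_power_integrable_on:
  assumes "\<psi> \<in> Phi" "0 < a"
  shows "(\<lambda>v. \<psi> v / v ^ n) integrable_on {a..b}"
  using assms by (intro integrable_continuous_interval Phi_divide_power_continuous_on) auto

lemma power_int_minus_mult: "(u::real) powi (- int n) * y = y / u ^ n"
  by (simp add: power_int_minus divide_inverse mult.commute)

lemma has_integral_power_mult_tail_integral:
  fixes h :: "real \<Rightarrow> real"
  assumes "a \<le> D" "D \<le> d" and h: "continuous_on {a..d} h"
  shows "((\<lambda>u. real e * u ^ (e - 1) * integral {u..d} h) has_integral
      D ^ e * integral {D..d} h - a ^ e * integral {a..d} h + integral {a..D} (\<lambda>u. u ^ e * h u)) {a..D}"
proof -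
  define G where "G u = u ^ e * integral {u..d} h + integral {a..u} (\<lambda>v. v ^ e * h v)" for u
  have "(G has_real_derivative real e * u ^ (e - 1) * integral {u..d} h) (at u within {a..D})"
    if u: "u \<in> {a..D}" for u
  proof -
    have "((\<lambda>u. integral {u..d} h) has_real_derivative - h u) (at u within {a..D})"
      using integral_has_real_derivative'[OF h, of u] u assms
      by (auto intro: DERIV_subset)
    moreover have "((\<lambda>u. integral {a..u} (\<lambda>v. v ^ e * h v)) has_real_derivative u ^ e * h u)
        (at u within {a..D})"
      using u assms h
      by (intro integral_has_real_derivative continuous_intros) (auto intro: continuous_on_subset)
    ultimately show ?thesis
      unfolding G_def by (auto intro!: derivative_eq_intros simp: algebra_simps)
  qed
  then have "((\<lambda>u. real e * u ^ (e - 1) * integral {u..d} h) has_integral G D - G a) {a..D}"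
    using assms by (intro fundamental_theorem_of_calculus)
      (auto simp: has_real_derivative_iff_has_vector_derivative[symmetric])
  then show ?thesis by (simp add: G_def algebra_simps)
qed

lemma integral_le_power_mult_tail_integral:
  fixes g h :: "real \<Rightarrow> real"
  assumes "0 \<le> a" "a \<le> D" "D \<le> d" "1 \<le> e"
    and h: "continuous_on {a..d} h" "\<And>v. v \<in> {a..d} \<Longrightarrow> 0 \<le> h v"
    and g: "g integrable_on {a..D}" "\<And>u. u \<in> {a..D} \<Longrightarrow> g u \<le> u ^ (e - 1) * integral {u..d} h"
  shows "integral {a..D} g \<le> D ^ e * integral {D..d} h + integral {a..D} (\<lambda>u. u ^ e * h u)"
proof -
  have tail_nonneg: "0 \<le> integral {u..d} h" if "u \<in> {a..d}" for u
    using that h by (intro integral_nonneg integrable_continuous_interval)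
      (auto intro: continuous_on_subset)
  have "integral {a..D} g
      \<le> D ^ e * integral {D..d} h - a ^ e * integral {a..d} h + integral {a..D} (\<lambda>u. u ^ e * h u)"
  proof (rule has_integral_le[OF integrable_integral[OF g(1)]
        has_integral_power_mult_tail_integral[OF assms(2,3) h(1)]])
    fix u assume u: "u \<in> {a..D}"
    have "0 \<le> u ^ (e - 1) * integral {u..d} h"
      using u assms tail_nonneg[of u] by auto
    then have "u ^ (e - 1) * integral {u..d} h \<le> real e * (u ^ (e - 1) * integral {u..d} h)"
      using mult_right_mono[of 1 "real e"] assms(4) by fastforce
    with g(2)[OF u] show "g u \<le> real e * u ^ (e - 1) * integral {u..d} h"
      by simp
  qed
  moreover have "0 \<le> a ^ e * integral {a..d} h"
    using assms tail_nonneg[of a] by auto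
  ultimately show ?thesis
    by linarith
qed

lemma integral_le_sum_integrals_cover:
  fixes f :: "real \<Rightarrow> real" and \<alpha> \<beta> :: "'i \<Rightarrow> real"
  assumes T: "finite T" and cover: "\<And>v. v \<in> {a..b} \<Longrightarrow> \<exists>t\<in>T. v \<in> {\<alpha> t..\<beta> t}"
    and f: "continuous_on S f" "\<And>v. v \<in> S \<Longrightarrow> 0 \<le> f v"
    and S: "{a..b} \<subseteq> S" "\<And>t. t \<in> T \<Longrightarrow> {\<alpha> t..\<beta> t} \<subseteq> S"
  shows "integral {a..b} f \<le> (\<Sum>t\<in>T. integral {\<alpha> t..\<beta> t} f)"
proof -
  define g where "g = (\<lambda>t v. if v \<in> {\<alpha> t..\<beta> t} then f v else 0)"
  have f_int: "f integrable_on {c..c'}" if "{c..c'} \<subseteq> S" for c c'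
    using that f(1) by (intro integrable_continuous_interval) (auto intro: continuous_on_subset)
  have g_int: "g t integrable_on {a..b}" if "t \<in> T" for t
    unfolding g_def integrable_restrict_Int Int_atLeastAtMost
    using S that by (intro f_int) auto
  have "integral {a..b} f \<le> integral {a..b} (\<lambda>v. \<Sum>t\<in>T. g t v)"
  proof (rule integral_le[OF f_int[OF S(1)] integrable_sum[OF T g_int]])
    fix v assume v: "v \<in> {a..b}"
    then obtain t where t: "t \<in> T" "v \<in> {\<alpha> t..\<beta> t}"
      using cover by blast
    have "g t v \<le> (\<Sum>t\<in>T. g t v)"
      using t T S f(2) v by (intro member_le_sum) (auto simp: g_def)
    with t show "f v \<le> (\<Sum>t\<in>T. g t v)"
      by (simp add: g_def)
  qed
  also have "\<dots> = (\<Sum>t\<in>T. integral {a..b} (g t))"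
    by (rule integral_sum[OF T g_int])
  also have "\<dots> = (\<Sum>t\<in>T. integral ({\<alpha> t..\<beta> t} \<inter> {a..b}) f)"
    unfolding g_def integral_restrict_Int ..
  also have "\<dots> \<le> (\<Sum>t\<in>T. integral {\<alpha> t..\<beta> t} f)"
  proof (rule sum_mono)
    fix t assume t: "t \<in> T"
    have "f integrable_on {\<alpha> t..\<beta> t}"
      using S(2)[OF t] by (rule f_int)
    then show "integral ({\<alpha> t..\<beta> t} \<inter> {a..b}) f \<le> integral {\<alpha> t..\<beta> t} f"
      using S(2)[OF t] f(2)
      by (intro integral_subset_le) (auto simp: Int_atLeastAtMost intro: integrable_on_subinterval)
  qed
  finally show ?thesis .
qed

lemma power_card_mult_prod_le:
  fixes a b :: real
  assumes "\<And>i. i \<in> S \<Longrightarrow> 0 \<le> a * f i \<and> a * f i \<le> b * g i"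
  shows "0 \<le> a ^ card S * prod f S" and "a ^ card S * prod f S \<le> b ^ card S * prod g S"
proof -
  have "0 \<le> (\<Prod>i\<in>S. a * f i)"
    using assms by (simp add: prod_nonneg)
  moreover have "(\<Prod>i\<in>S. a * f i) \<le> (\<Prod>i\<in>S. b * g i)"
    using assms by (rule prod_mono)
  ultimately show "0 \<le> a ^ card S * prod f S" "a ^ card S * prod f S \<le> b ^ card S * prod g S"
    by (simp_all add: prod.distrib)
qed

lemma power_mult_le_prod:
  fixes D y :: real
  assumes "finite S" "S \<noteq> {}" "0 \<le> D" "\<And>i. i \<in> S \<Longrightarrow> D \<le> f i"
    and "0 \<le> y" "y \<le> D \<or> (\<exists>i\<in>S. y \<le> f i)"
  shows "D ^ (card S - 1) * y \<le> prod f S"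
proof -
  obtain i\<^sub>0 where i\<^sub>0: "i\<^sub>0 \<in> S" "y \<le> f i\<^sub>0"
    using assms by (force intro: order_trans)
  have "D ^ card (S - {i\<^sub>0}) \<le> prod f (S - {i\<^sub>0})"
    using prod_mono[of "S - {i\<^sub>0}" "\<lambda>_. D" f] assms by auto
  then have "D ^ (card S - 1) * y \<le> prod f (S - {i\<^sub>0}) * f i\<^sub>0"
    using assms i\<^sub>0 by (intro mult_mono prod_nonneg) (auto intro: order_trans)
  then show ?thesis
    using assms i\<^sub>0 by (simp add: prod.remove mult.commute)
qed

lemma mult_add_le_double:
  fixes D f t L :: real
  assumes "0 \<le> D" "D \<le> f" "D \<le> L" "0 \<le> t" "t \<le> L"
  shows "D * (f + t) \<le> 2 * L * f"
proof -
  have "D * f \<le> L * f" "D * t \<le> f * L"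
    using assms by (auto intro: mult_right_mono mult_mono)
  then show ?thesis
    by (simp add: algebra_simps)
qed

lemma double_power_mult_power_le:
  fixes L v :: real
  assumes "0 < L" "L \<le> v" "c \<le> k + 1" "c = 0 \<Longrightarrow> v \<le> 2 * L"
  shows "(2 * L) ^ c * v ^ (k + 1 - c) \<le> 2 ^ (c + 1) * L * v ^ k"
proof (cases c)
  case 0
  then show ?thesis
    using assms mult_right_mono[of v "2 * L" "v ^ k"] by simp
next
  case (Suc c')
  have "L ^ c' * v ^ (k - c') \<le> v ^ c' * v ^ (k - c')"
    using assms by (intro mult_right_mono power_mono) auto
  also have "\<dots> = v ^ k"
    using assms Suc by (simp flip: power_add)
  finally have "(2 * L) ^ c * v ^ (k + 1 - c) \<le> 2 ^ c * L * v ^ k"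
    using assms Suc by (simp add: power_mult_distrib mult_left_mono mult.assoc)
  also have "\<dots> \<le> 2 ^ (c + 1) * L * v ^ k"
    using assms by (intro mult_right_mono) auto
  finally show ?thesis .
qed

lemma sq_mult_two_power_less:
  assumes "3 \<le> k"
  shows "k\<^sup>2 * 2 ^ k < (2::nat) ^ k\<^sup>2"
proof -
  have "k\<^sup>2 \<le> 2 ^ (k + 1)"
    using assms
  proof (induction k rule: nat_induct_at_least)
    case (Suc n)
    have "3 * n \<le> n * n"
      using Suc.hyps by (intro mult_right_mono) auto
    have "(Suc n)\<^sup>2 \<le> 2 * n\<^sup>2"
      by (simp add: power2_eq_square) (use \<open>3 * n \<le> n * n\<close> Suc.hyps in linarith)
    then show ?case
      using Suc.IH by simp
  qed simp
  then have "k\<^sup>2 * 2 ^ k \<le> 2 ^ (k + 1) * 2 ^ k"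
    by (rule mult_right_mono) simp
  also have "\<dots> = 2 ^ (k + 1 + k)"
    by (rule power_add[symmetric])
  also have "\<dots> < 2 ^ k\<^sup>2"
  proof (rule power_strict_increasing)
    have "3 * k \<le> k * k"
      using assms by (intro mult_right_mono) auto
    then show "k + 1 + k < k\<^sup>2"
      using assms unfolding power2_eq_square by linarith
  qed simp
  finally show ?thesis .
qed

definition Lambda_denom :: "nat \<Rightarrow> nat \<Rightarrow> (nat \<Rightarrow> real) \<Rightarrow> nat \<Rightarrow> real" where
  "Lambda_denom p q y n = (\<Prod>i<p. y q - y i) * (\<Prod>i\<in>{q+1..n}. y i - y p)"

definition proper_superpairs :: "nat \<Rightarrow> nat \<Rightarrow> nat \<Rightarrow> (nat \<times> nat) set" where
  "proper_superpairs n p q = {(p', q'). p' \<le> p \<and> q \<le> q' \<and> q' \<le> n \<and> (p', q') \<noteq> (p, q)}"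

lemma Lambda_pqr_eq:
  assumes "p + r \<le> q"
  shows "Lambda_pqr p q r y n \<psi> =
    integral {y q - y p..dpq y n p q} (\<lambda>u. \<psi> u / u ^ (q - p - r + 1)) / Lambda_denom p q y n"
proof -
  have "int p + int r - int q - 1 = - int (q - p - r + 1)"
    using assms by simp
  then have "(\<lambda>u. u powi (int p + int r - int q - 1) * \<psi> u) = (\<lambda>u. \<psi> u / u ^ (q - p - r + 1))"
    by (simp only: power_int_minus_mult)
  then show ?thesis
    unfolding Lambda_pqr_def Lambda_denom_def by simp
qed

lemma finite_Qset: "finite (Qset n r)"
  by (rule finite_subset[of _ "{..n} \<times> {..n}"]) (auto simp: Qset_def)

lemma proper_superpairs_subset_Qset:
  "(p, q) \<in> Qset m r \<Longrightarrow> proper_superpairs m p q \<subseteq> Qset m r"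
  by (auto simp: proper_superpairs_def Qset_def)

lemma dpq_full: "dpq y n 0 n = 2 * (y n - y 0)"
  by (simp add: dpq_def ynext_def yprev_def)

locale knot_sequence =
  fixes r m :: nat and x :: "nat \<Rightarrow> real"
  assumes mono: "\<And>i j. i \<le> j \<Longrightarrow> j \<le> m \<Longrightarrow> x i \<le> x j"
    and separated: "\<And>j. j + r + 1 \<le> m \<Longrightarrow> x j < x (j + r + 1)"
begin

lemma less_if_gap: "i + r + 1 \<le> j \<Longrightarrow> j \<le> m \<Longrightarrow> x i < x j"
  using separated[of i] mono[of "i + r + 1" j] by auto

lemma Qset_less: "(p, q) \<in> Qset m r \<Longrightarrow> x p < x q"
  unfolding Qset_def using less_if_gap by auto

lemma Lambda_denom_pos:
  assumes "(p, q) \<in> Qset m r"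
  shows "0 < Lambda_denom p q x m"
  using assms less_if_gap unfolding Lambda_denom_def Qset_def
  by (auto intro!: mult_pos_pos prod_pos)

lemma dpq_ge: "p \<le> m \<Longrightarrow> q \<le> m \<Longrightarrow> x q - x p \<le> dpq x m p q"
  using mono[of q "q + 1"] mono[of "p - 1" p] mono[of 0 m]
  unfolding dpq_def ynext_def yprev_def by auto

lemma dpq_le_left:
  assumes "i < p" "p \<le> m"
  shows "dpq x m p q \<le> x q - x i"
proof -
  have "x i \<le> x (p - 1)"
    using assms by (intro mono) auto
  then show ?thesis
    using assms unfolding dpq_def yprev_def by auto
qed

lemma dpq_le_right: "q < i \<Longrightarrow> i \<le> m \<Longrightarrow> dpq x m p q \<le> x i - x p"
  using mono[of "q + 1" i] unfolding dpq_def ynext_def by auto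

lemma dpq_le_range:
  assumes "(p, q) \<in> Qset m r" "q + 2 \<le> m + p"
  shows "dpq x m p q \<le> x m - x 0"
proof (cases "q < m")
  case True
  then show ?thesis
    using dpq_le_right[of q m p] mono[of 0 p] assms by (auto simp: Qset_def)
next
  case False
  then have "0 < p" "q = m"
    using assms by (auto simp: Qset_def)
  then show ?thesis
    using dpq_le_left[of 0 p q] assms by (auto simp: Qset_def)
qed

lemma Lambda_pqr_nonneg:
  assumes "(p, q) \<in> Qset m r" "\<psi> \<in> Phi"
  shows "0 \<le> Lambda_pqr p q r x m \<psi>"
proof -
  have pos: "0 < x q - x p"
    using Qset_less[OF assms(1)] by simp
  have "0 \<le> integral {x q - x p..dpq x m p q} (\<lambda>u. \<psi> u / u ^ (q - p - r + 1))"
    using pos Phi_nonneg[OF assms(2)]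
    by (intro integral_nonneg Phi_divide_power_integrable_on[OF assms(2)]) auto
  then show ?thesis
    using assms Lambda_denom_pos[OF assms(1)] by (simp add: Lambda_pqr_eq Qset_def)
qed

lemma Lambda_pqr_le_Lambda_r:
  assumes "(p, q) \<in> Qset m r"
  shows "Lambda_pqr p q r x m \<psi> \<le> Lambda_r r x m \<psi>"
  unfolding Lambda_r_def using assms finite_Qset by (auto intro: Max_ge)

lemma Lambda_r_nonneg: "(p, q) \<in> Qset m r \<Longrightarrow> \<psi> \<in> Phi \<Longrightarrow> 0 \<le> Lambda_r r x m \<psi>"
  using Lambda_pqr_nonneg Lambda_pqr_le_Lambda_r by (meson order_trans)

lemma dpq_gt_if_maximal:
  assumes "p \<le> m" "q \<le> m" "\<not> (p = 0 \<and> q = m)"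
    and "q < m \<Longrightarrow> v < x (q + 1) - x p" "0 < p \<Longrightarrow> v < x q - x (p - 1)"
  shows "v < dpq x m p q"
proof -
  have "x p \<le> x m" "x 0 \<le> x q" "q < m \<Longrightarrow> x (q + 1) \<le> x m" "0 < p \<Longrightarrow> x 0 \<le> x (p - 1)"
    using assms by (auto intro: mono)
  then show ?thesis
    using assms unfolding dpq_def ynext_def yprev_def by (cases "q < m"; cases "0 < p") auto
qed

lemma superpair_interval_cover:
  assumes pq: "(p, q) \<in> Qset m r" "q + 2 \<le> m + p"
    and v: "dpq x m p q \<le> v" "v \<le> 2 * (x m - x 0)"
  shows "\<exists>p' q'. (p', q') \<in> proper_superpairs m p q \<and> v \<in> {x q' - x p'..dpq x m p' q'}"
proof -
  define S where "S = (\<lambda>(p', q'). p' \<le> p \<and> q \<le> q' \<and> q' \<le> m \<and> x q' - x p' \<le> v)"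
  have "S (p, q)"
    using pq dpq_ge[of p q] v by (auto simp: S_def Qset_def)
  moreover have "\<forall>t. S t \<longrightarrow> snd t - fst t < m + 1"
    by (auto simp: S_def)
  ultimately obtain p' q' where S': "S (p', q')"
    and longest: "\<And>t. S t \<Longrightarrow> snd t - fst t \<le> q' - p'"
    using Lattices_Big.ex_has_greatest_nat[of S "(p, q)" "\<lambda>t. snd t - fst t" "m + 1"] by force
  have pq': "p' \<le> p" "q \<le> q'" "q' \<le> m" "x q' - x p' \<le> v" "p + r + 1 \<le> q"
    using S' pq by (auto simp: S_def Qset_def)
  have "v < x (q' + 1) - x p'" if "q' < m"
    using longest[of "(p', q' + 1)"] pq' that by (force simp: S_def)
  moreover have "v < x q' - x (p' - 1)" if "0 < p'"
    using longest[of "(p' - 1, q')"] pq' that by (force simp: S_def)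
  ultimately have "v < dpq x m p' q'" if "\<not> (p' = 0 \<and> q' = m)"
    using pq' that by (intro dpq_gt_if_maximal) auto
  moreover have "v \<le> dpq x m p' q'" if "p' = 0 \<and> q' = m"
    using that v by (simp add: dpq_full)
  ultimately have "v \<in> {x q' - x p'..dpq x m p' q'}" "(p', q') \<noteq> (p, q)"
    using pq' pq v by force+
  then show ?thesis
    using pq' unfolding proper_superpairs_def by blast
qed

lemma dpq_le_superpair_gap:
  assumes "(p', q') \<in> proper_superpairs m p q" "p \<le> m"
  shows "dpq x m p q \<le> x q' - x p'"
proof (cases "p' < p")
  case True
  then show ?thesis
    using assms dpq_le_left[of p' p q] mono[of q q']
    unfolding proper_superpairs_def by auto
next
  case False
  then show ?thesis
    using assms dpq_le_right[of q q' p]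
    unfolding proper_superpairs_def by auto
qed

lemma Lambda_denom_split:
  assumes "p' \<le> p" "q \<le> q'" "q' \<le> m"
  shows "Lambda_denom p q x m =
    ((\<Prod>i<p'. x q - x i) * (\<Prod>i\<in>{q'+1..m}. x i - x p)) *
    ((\<Prod>i\<in>{p'..<p}. x q - x i) * (\<Prod>i\<in>{q+1..q'}. x i - x p))"
proof -
  have "{..<p} = {..<p'} \<union> {p'..<p}" "{q+1..m} = {q+1..q'} \<union> {q'+1..m}"
    using assms by auto
  then have "(\<Prod>i<p. x q - x i) = (\<Prod>i<p'. x q - x i) * (\<Prod>i\<in>{p'..<p}. x q - x i)"
    "(\<Prod>i\<in>{q+1..m}. x i - x p) = (\<Prod>i\<in>{q+1..q'}. x i - x p) * (\<Prod>i\<in>{q'+1..m}. x i - x p)"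
    by (simp_all add: prod.union_disjoint ivl_disj_int)
  then show ?thesis
    unfolding Lambda_denom_def by (simp add: ac_simps)
qed

lemma superpair_denom_le:
  assumes sup: "(p', q') \<in> proper_superpairs m p q" and "p \<le> q"
  defines "c \<equiv> p' + (m - q')"
  shows "dpq x m p q ^ c * Lambda_denom p' q' x m
    \<le> (2 * (x q' - x p')) ^ c * ((\<Prod>i<p'. x q - x i) * (\<Prod>i\<in>{q'+1..m}. x i - x p))"
proof -
  define D L where "D = dpq x m p q" and "L = x q' - x p'"
  have sup': "p' \<le> p" "q \<le> q'" "q' \<le> m"
    using sup by (auto simp: proper_superpairs_def)
  have D: "0 \<le> D" "D \<le> L"
    using dpq_ge[of p q] dpq_le_superpair_gap[OF sup] mono[of p q] assms sup'
    by (auto simp: D_def L_def)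
  have left: "0 \<le> D * (x q' - x i) \<and> D * (x q' - x i) \<le> 2 * L * (x q - x i)"
    if "i \<in> {..<p'}" for i
    using that mult_add_le_double[of D "x q - x i" L "x q' - x q"] D dpq_le_left[of i p q]
      mono[of q q'] mono[of p' q] sup' assms(2) by (auto simp: D_def L_def)
  have right: "0 \<le> D * (x i - x p') \<and> D * (x i - x p') \<le> 2 * L * (x i - x p)"
    if "i \<in> {q'+1..m}" for i
    using that mult_add_le_double[of D "x i - x p" L "x p - x p'"] D dpq_le_right[of q i p]
      mono[of p q'] mono[of p' p] sup' assms(2) by (auto simp: D_def L_def)
  have "D ^ c * Lambda_denom p' q' x m =
      (D ^ card {..<p'} * (\<Prod>i<p'. x q' - x i)) *
      (D ^ card {q'+1..m} * (\<Prod>i\<in>{q'+1..m}. x i - x p'))"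
    by (simp add: c_def Lambda_denom_def power_add ac_simps)
  also have "\<dots> \<le> ((2 * L) ^ card {..<p'} * (\<Prod>i<p'. x q - x i)) *
      ((2 * L) ^ card {q'+1..m} * (\<Prod>i\<in>{q'+1..m}. x i - x p))"
    using power_card_mult_prod_le[where S="{..<p'}" and f="\<lambda>i. x q' - x i", OF left]
      power_card_mult_prod_le[where S="{q'+1..m}" and f="\<lambda>i. x i - x p'", OF right]
    by (meson mult_mono')
  also have "\<dots> = (2 * L) ^ c * ((\<Prod>i<p'. x q - x i) * (\<Prod>i\<in>{q'+1..m}. x i - x p))"
    by (simp add: c_def power_add ac_simps)
  finally show ?thesis
    by (simp add: D_def L_def)
qed

lemma superpair_gap_le_inner:
  assumes sup: "(p', q') \<in> proper_superpairs m p q" and "p \<le> q"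
  defines "j \<equiv> (p - p') + (q' - q)"
  shows "dpq x m p q ^ (j - 1) * (x q' - x p')
    \<le> 2 * ((\<Prod>i\<in>{p'..<p}. x q - x i) * (\<Prod>i\<in>{q+1..q'}. x i - x p))"
proof -
  define D J where "D = dpq x m p q" and "J = {p'..<p} \<union> {q+1..q'}"
  define F where "F i = (if i < p then x q - x i else x i - x p)" for i
  have sup': "p' \<le> p" "q \<le> q'" "q' \<le> m" "p' < p \<or> q < q'"
    using sup by (auto simp: proper_superpairs_def)
  have "prod F J = prod F {p'..<p} * prod F {q+1..q'}"
    unfolding J_def using assms(2) by (intro prod.union_disjoint) auto
  also have "\<dots> = (\<Prod>i\<in>{p'..<p}. x q - x i) * (\<Prod>i\<in>{q+1..q'}. x i - x p)"
    using assms(2) by (intro arg_cong2[where f = "(*)"] prod.cong) (auto simp: F_def)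
  finally have prod_J: "(\<Prod>i\<in>{p'..<p}. x q - x i) * (\<Prod>i\<in>{q+1..q'}. x i - x p) = prod F J" ..
  have card_J: "card J = j"
    unfolding J_def j_def using assms(2) by (subst card_Un_disjoint) auto
  have D: "0 \<le> D" "x q - x p \<le> D" "\<And>i. i \<in> J \<Longrightarrow> D \<le> F i"
    using dpq_ge[of p q] mono[of p q] dpq_le_left[of _ p q] dpq_le_right[of q _ p] sup' assms(2)
    by (auto simp: D_def J_def F_def)
  have "J \<noteq> {}"
    using sup' by (auto simp: J_def)
  have "x q - x p' \<le> D \<or> (\<exists>i\<in>J. x q - x p' \<le> F i)"
    using D(2) sup' by (cases "p' < p") (auto simp: J_def F_def)
  moreover have "x q' - x p \<le> D \<or> (\<exists>i\<in>J. x q' - x p \<le> F i)"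
    using D(2) sup' assms(2) by (cases "q < q'") (auto simp: J_def F_def intro: bexI[of _ q'])
  moreover have "0 \<le> x q - x p'" "0 \<le> x q' - x p"
    using mono[of p' q] mono[of p q'] sup' assms(2) by auto
  ultimately have "D ^ (j - 1) * (x q - x p') \<le> prod F J" "D ^ (j - 1) * (x q' - x p) \<le> prod F J"
    using power_mult_le_prod[of J D F] D \<open>J \<noteq> {}\<close> unfolding card_J by (auto simp: J_def)
  moreover have "D ^ (j - 1) * (x q' - x p') \<le> D ^ (j - 1) * ((x q - x p') + (x q' - x p))"
    using D mono[of p q] sup' assms(2) by (intro mult_left_mono) auto
  ultimately show ?thesis
    unfolding prod_J D_def by (simp add: algebra_simps)
qed

lemma superpair_weight_le:
  assumes pq: "(p, q) \<in> Qset m r" and sup: "(p', q') \<in> proper_superpairs m p q"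
    and v: "v \<in> {x q' - x p'..dpq x m p' q'}"
  shows "dpq x m p q ^ (m - (q - p) - 1) * v ^ (q' - p' - r + 1) * Lambda_denom p' q' x m
    \<le> 2 ^ (m - r) * Lambda_denom p q x m * v ^ (m - r)"
proof -
  define D L k where "D = dpq x m p q" and "L = x q' - x p'" and "k = m - r"
  define c j where "c = p' + (m - q')" and "j = (p - p') + (q' - q)"
  define C A where "C = (\<Prod>i<p'. x q - x i) * (\<Prod>i\<in>{q'+1..m}. x i - x p)"
    and "A = (\<Prod>i\<in>{p'..<p}. x q - x i) * (\<Prod>i\<in>{q+1..q'}. x i - x p)"
  have sup': "p' \<le> p" "q \<le> q'" "q' \<le> m" "p' < p \<or> q < q'" and gap: "p + r + 1 \<le> q"
    using sup pq by (auto simp: proper_superpairs_def Qset_def)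
  have exponents: "m - (q - p) - 1 = (j - 1) + c" "q' - p' - r + 1 = k + 1 - c" "c + 2 \<le> k"
    using sup' gap unfolding c_def j_def k_def by auto
  have D: "0 < D" "D \<le> L"
    using Qset_less[OF pq] dpq_ge[of p q] dpq_le_superpair_gap[OF sup] gap sup'
    by (auto simp: D_def L_def)
  have v': "0 < v" "L \<le> v"
    using v D by (auto simp: L_def)
  have C: "0 \<le> C"
    using gap sup' unfolding C_def by (intro mult_nonneg_nonneg prod_nonneg) (auto intro!: mono)
  \<comment> \<open>Without outer factors (\<open>[p',q'] = [0,m]\<close>) the extra power of \<open>v\<close> is paid by \<open>v \<le> d(0,m) = 2 L\<close>.\<close>
  have "v \<le> 2 * L" if "c = 0"
  proof -
    have "p' = 0" "q' = m"
      using that sup' by (auto simp: c_def)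
    then show ?thesis
      using v by (simp add: L_def dpq_full)
  qed
  then have exchange: "(2 * L) ^ c * v ^ (k + 1 - c) \<le> 2 ^ (c + 1) * L * v ^ k"
    using D v' exponents by (intro double_power_mult_power_le) auto
  have "D ^ (m - (q - p) - 1) * v ^ (q' - p' - r + 1) * Lambda_denom p' q' x m
      = D ^ (j - 1) * v ^ (k + 1 - c) * (D ^ c * Lambda_denom p' q' x m)"
    unfolding exponents by (simp add: power_add ac_simps)
  also have "\<dots> \<le> D ^ (j - 1) * v ^ (k + 1 - c) * ((2 * L) ^ c * C)"
    using superpair_denom_le[OF sup] D v' gap
    unfolding C_def D_def L_def c_def by (intro mult_left_mono) auto
  also have "\<dots> = D ^ (j - 1) * ((2 * L) ^ c * v ^ (k + 1 - c)) * C"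
    by (simp add: ac_simps)
  also have "\<dots> \<le> D ^ (j - 1) * (2 ^ (c + 1) * L * v ^ k) * C"
    using exchange D C by (intro mult_left_mono mult_right_mono) auto
  also have "\<dots> = 2 ^ (c + 1) * (D ^ (j - 1) * L) * C * v ^ k"
    by (simp add: ac_simps)
  also have "\<dots> \<le> 2 ^ (c + 1) * (2 * A) * C * v ^ k"
    using superpair_gap_le_inner[OF sup] C v' gap
    unfolding A_def D_def L_def j_def by (intro mult_right_mono mult_left_mono) auto
  also have "\<dots> = 2 ^ (c + 2) * Lambda_denom p q x m * v ^ k"
    using Lambda_denom_split[OF sup'(1-3)] by (simp add: A_def C_def ac_simps)
  also have "\<dots> \<le> 2 ^ k * Lambda_denom p q x m * v ^ k"
    using exponents Lambda_denom_pos[OF pq] v' by (intro mult_right_mono power_increasing) auto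
  finally show ?thesis
    by (simp add: D_def k_def)
qed

lemma superpair_integral_le:
  assumes pq: "(p, q) \<in> Qset m r" and sup: "(p', q') \<in> proper_superpairs m p q"
    and \<omega>: "\<omega> \<in> Phi"
  shows "dpq x m p q ^ (m - (q - p) - 1) * integral {x q' - x p'..dpq x m p' q'} (\<lambda>v. \<omega> v / v ^ (m - r))
    \<le> 2 ^ (m - r) * Lambda_denom p q x m * Lambda_r r x m \<omega>"
proof -
  define D e k N' where "D = dpq x m p q" and "e = m - (q - p) - 1" and "k = m - r"
    and "N' = q' - p' - r + 1"
  define P P' where "P = Lambda_denom p q x m" and "P' = Lambda_denom p' q' x m"
  have Q': "(p', q') \<in> Qset m r"
    using proper_superpairs_subset_Qset[OF pq] sup by blast
  have pos: "0 < x q' - x p'" "0 < P'"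
    using Qset_less[OF Q'] Lambda_denom_pos[OF Q'] by (auto simp: P'_def)
  have "D ^ e * integral {x q' - x p'..dpq x m p' q'} (\<lambda>v. \<omega> v / v ^ k)
      = integral {x q' - x p'..dpq x m p' q'} (\<lambda>v. D ^ e * (\<omega> v / v ^ k))"
    by (rule integral_mult_right[symmetric])
  also have "\<dots> \<le> integral {x q' - x p'..dpq x m p' q'} (\<lambda>v. 2 ^ k * P / P' * (\<omega> v / v ^ N'))"
  proof (rule integral_le)
    fix v assume v: "v \<in> {x q' - x p'..dpq x m p' q'}"
    then have "0 < v"
      using pos by auto
    then have "0 \<le> \<omega> v / (v ^ k * v ^ N' * P')"
      using Phi_nonneg[OF \<omega>] pos by auto
    from mult_right_mono[OF superpair_weight_le[OF pq sup v] this]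
    show "D ^ e * (\<omega> v / v ^ k) \<le> 2 ^ k * P / P' * (\<omega> v / v ^ N')"
      using \<open>0 < v\<close> pos by (simp add: D_def e_def k_def N'_def P_def P'_def field_simps)
  next
    show "(\<lambda>v. D ^ e * (\<omega> v / v ^ k)) integrable_on {x q' - x p'..dpq x m p' q'}"
      using \<omega> pos(1) by (intro integrable_on_mult_right Phi_divide_power_integrable_on)
    show "(\<lambda>v. 2 ^ k * P / P' * (\<omega> v / v ^ N')) integrable_on {x q' - x p'..dpq x m p' q'}"
      using \<omega> pos(1) by (intro integrable_on_mult_right Phi_divide_power_integrable_on)
  qed
  also have "\<dots> = 2 ^ k * P / P' * integral {x q' - x p'..dpq x m p' q'} (\<lambda>v. \<omega> v / v ^ N')"
    by (rule integral_mult_right)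
  also have "\<dots> = 2 ^ k * P * Lambda_pqr p' q' r x m \<omega>"
    using Q' by (simp add: Lambda_pqr_eq Qset_def N'_def P'_def)
  also have "\<dots> \<le> 2 ^ k * P * Lambda_r r x m \<omega>"
    using Lambda_pqr_le_Lambda_r[OF Q'] Lambda_denom_pos[OF pq] by (simp add: P_def)
  finally show ?thesis
    by (simp add: D_def e_def k_def P_def)
qed

lemma card_proper_superpairs_le:
  assumes "(p, q) \<in> Qset m r"
  shows "card (proper_superpairs m p q) \<le> (m - r)\<^sup>2"
proof -
  have "proper_superpairs m p q \<subseteq> {..p} \<times> {q..m}"
    by (auto simp: proper_superpairs_def)
  then have "card (proper_superpairs m p q) \<le> card ({..p} \<times> {q..m})"
    by (intro card_mono) auto
  also have "\<dots> = (p + 1) * (m + 1 - q)"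
    by (simp add: card_cartesian_product)
  also have "\<dots> \<le> (m - r) * (m - r)"
    using assms by (intro mult_mono) (auto simp: Qset_def)
  finally show ?thesis
    by (simp add: power2_eq_square)
qed

lemma tail_integral_le:
  assumes pq: "(p, q) \<in> Qset m r" "q + 2 \<le> m + p" and \<omega>: "\<omega> \<in> Phi"
  shows "dpq x m p q ^ (m - (q - p) - 1) * integral {dpq x m p q..2 * (x m - x 0)} (\<lambda>v. \<omega> v / v ^ (m - r))
    \<le> real ((m - r)\<^sup>2) * 2 ^ (m - r) * Lambda_denom p q x m * Lambda_r r x m \<omega>"
proof -
  define D e h B where "D = dpq x m p q" and "e = m - (q - p) - 1"
    and "h = (\<lambda>v. \<omega> v / v ^ (m - r))" and "B = 2 ^ (m - r) * Lambda_denom p q x m * Lambda_r r x m \<omega>"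
  define T where "T = proper_superpairs m p q"
  have T: "finite T" "T \<subseteq> Qset m r"
    using proper_superpairs_subset_Qset[OF pq(1)] finite_Qset
    by (auto simp: T_def intro: finite_subset)
  have "0 < D"
    using Qset_less[OF pq(1)] dpq_ge[of p q] pq(1) by (auto simp: D_def Qset_def)
  define lo hi where "lo = (\<lambda>(p', q'). x q' - x p')" and "hi = (\<lambda>(p', q'). dpq x m p' q')"
  have "integral {D..2 * (x m - x 0)} h \<le> (\<Sum>t\<in>T. integral {lo t..hi t} h)"
  proof (rule integral_le_sum_integrals_cover[where S = "{0<..}"])
    show "\<exists>t\<in>T. v \<in> {lo t..hi t}" if v: "v \<in> {D..2 * (x m - x 0)}" for v
    proof -
      obtain p' q' where "(p', q') \<in> T" "v \<in> {x q' - x p'..dpq x m p' q'}"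
        using superpair_interval_cover[OF pq, of v] v by (auto simp: D_def T_def)
      then show ?thesis
        by (intro bexI[of _ "(p', q')"]) (auto simp: lo_def hi_def)
    qed
    show "{lo t..hi t} \<subseteq> {0<..}" if "t \<in> T" for t
      using that T(2) Qset_less by (cases t) (fastforce simp: lo_def)
  qed (use T \<open>0 < D\<close> \<omega> Phi_nonneg in \<open>auto simp: h_def intro: Phi_divide_power_continuous_on\<close>)
  then have "D ^ e * integral {D..2 * (x m - x 0)} h \<le> (\<Sum>t\<in>T. D ^ e * integral {lo t..hi t} h)"
    using \<open>0 < D\<close> by (simp add: sum_distrib_left[symmetric] mult_left_mono)
  also have "\<dots> \<le> (\<Sum>t\<in>T. B)"
    using superpair_integral_le[OF pq(1) _ \<omega>]
    by (intro sum_mono) (auto simp: T_def D_def e_def h_def B_def lo_def hi_def)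
  also have "\<dots> \<le> real ((m - r)\<^sup>2) * B"
    using card_proper_superpairs_le[OF pq(1)] Lambda_denom_pos[OF pq(1)] Lambda_r_nonneg[OF pq(1) \<omega>]
    by (simp add: T_def B_def mult_right_mono)
  finally show ?thesis
    by (simp add: D_def e_def h_def B_def mult.assoc)
qed

lemma Lambda_pqr_le_if_majorant:
  assumes pq: "(p, q) \<in> Qset m r" "q + 2 \<le> m + p" and \<phi>: "\<phi> \<in> Phi" and \<omega>: "\<omega> \<in> Phi"
    and majorant: "\<And>t. 0 < t \<Longrightarrow> t \<le> x m - x 0 \<Longrightarrow>
      \<phi> t \<le> t ^ (m - r - 1) * integral {t..2 * (x m - x 0)} (\<lambda>u. \<omega> u / u ^ (m - r))"
  shows "Lambda_pqr p q r x m \<phi> \<le> (real ((m - r)\<^sup>2) * 2 ^ (m - r) + 1) * Lambda_r r x m \<omega>"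
proof -
  define a D d where "a = x q - x p" and "D = dpq x m p q" and "d = 2 * (x m - x 0)"
  define N e k where "N = q - p - r + 1" and "e = m - (q - p) - 1" and "k = m - r"
  define P M where "P = Lambda_denom p q x m" and "M = Lambda_r r x m \<omega>"
  have exponents: "k = N + e" "1 \<le> e" "k - 1 = N + (e - 1)"
    using pq by (auto simp: Qset_def N_def e_def k_def)
  have range: "0 < a" "a \<le> D" "D \<le> x m - x 0"
    using Qset_less[OF pq(1)] dpq_ge[of p q] dpq_le_range[OF pq] pq(1)
    by (auto simp: a_def D_def Qset_def)
  have P: "0 < P"
    using Lambda_denom_pos[OF pq(1)] by (simp add: P_def)
  have "integral {a..D} (\<lambda>u. \<phi> u / u ^ N)
      \<le> D ^ e * integral {D..d} (\<lambda>v. \<omega> v / v ^ k) + integral {a..D} (\<lambda>u. u ^ e * (\<omega> u / u ^ k))"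
  proof (rule integral_le_power_mult_tail_integral)
    fix u assume u: "u \<in> {a..D}"
    then have "\<phi> u / u ^ N \<le> u ^ (k - 1) * integral {u..d} (\<lambda>v. \<omega> v / v ^ k) / u ^ N"
      using majorant[of u] range by (intro divide_right_mono) (auto simp: d_def k_def)
    also have "\<dots> = u ^ (e - 1) * integral {u..d} (\<lambda>v. \<omega> v / v ^ k)"
      unfolding exponents(3) power_add using u range by simp
    finally show "\<phi> u / u ^ N \<le> u ^ (e - 1) * integral {u..d} (\<lambda>v. \<omega> v / v ^ k)" .
  qed (use range exponents \<phi> \<omega> Phi_nonneg in
      \<open>auto simp: d_def intro: Phi_divide_power_integrable_on Phi_divide_power_continuous_on\<close>)
  also have "integral {a..D} (\<lambda>u. u ^ e * (\<omega> u / u ^ k)) = P * Lambda_pqr p q r x m \<omega>"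
  proof -
    have "integral {a..D} (\<lambda>u. u ^ e * (\<omega> u / u ^ k)) = integral {a..D} (\<lambda>u. \<omega> u / u ^ N)"
      using range by (intro integral_cong) (simp add: exponents(1) power_add)
    then show ?thesis
      using pq(1) P by (simp add: Lambda_pqr_eq Qset_def a_def D_def N_def P_def)
  qed
  also have "\<dots> \<le> P * M"
    using Lambda_pqr_le_Lambda_r[OF pq(1)] P by (simp add: M_def)
  also have "D ^ e * integral {D..d} (\<lambda>v. \<omega> v / v ^ k) \<le> real (k\<^sup>2) * 2 ^ k * P * M"
    using tail_integral_le[OF pq \<omega>] by (simp add: D_def d_def e_def k_def P_def M_def)
  finally have "integral {a..D} (\<lambda>u. \<phi> u / u ^ N) / P \<le> (real (k\<^sup>2) * 2 ^ k + 1) * M"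
    using P by (simp add: divide_le_eq algebra_simps)
  then show ?thesis
    using pq(1) by (simp add: Lambda_pqr_eq Qset_def a_def D_def N_def P_def M_def k_def)
qed

end

theorem lemma3p2:
  fixes r m :: nat and x :: "nat \<Rightarrow> real" and \<phi> \<omega> :: "real \<Rightarrow> real" and p q :: nat
  assumes "m \<ge> 1" and "m \<ge> r + 1"
    and "\<And>i j. i \<le> j \<Longrightarrow> j \<le> m \<Longrightarrow> x i \<le> x j"
    and "\<And>j. j + r + 1 \<le> m \<Longrightarrow> x j < x (j + r + 1)"
    and "(p, q) \<in> Qset m r" and "q + 2 \<le> m + p"
    and "\<phi> \<in> Phi" and "\<omega> \<in> Phi"
    and "\<And>t. 0 < t \<Longrightarrow> t \<le> (2 * (x m - x 0)) / 2 \<Longrightarrow>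
           \<phi> t \<le> t ^ (m - r - 1) *
             integral {t .. 2 * (x m - x 0)} (\<lambda>u. u powi (- int (m - r)) * \<omega> u)"
  shows "Lambda_pqr p q r x m \<phi> \<le> 2 ^ ((m - r)^2) * Lambda_r r x m \<omega>"
proof -
  interpret knot_sequence r m x
    using assms(3,4) by unfold_locales
  have "Lambda_pqr p q r x m \<phi> \<le> (real ((m - r)\<^sup>2) * 2 ^ (m - r) + 1) * Lambda_r r x m \<omega>"
  proof (rule Lambda_pqr_le_if_majorant[OF assms(5-8)])
    fix t :: real assume "0 < t" "t \<le> x m - x 0"
    then show "\<phi> t \<le> t ^ (m - r - 1) * integral {t..2 * (x m - x 0)} (\<lambda>u. \<omega> u / u ^ (m - r))"
      using assms(9)[of t] by (simp add: power_int_minus_mult)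
  qed
  also have "\<dots> \<le> 2 ^ ((m - r)\<^sup>2) * Lambda_r r x m \<omega>"
  proof (rule mult_right_mono)
    have "(m - r)\<^sup>2 * 2 ^ (m - r) < (2::nat) ^ (m - r)\<^sup>2"
      using assms(5,6) by (intro sq_mult_two_power_less) (auto simp: Qset_def)
    then have "real ((m - r)\<^sup>2 * 2 ^ (m - r) + 1) \<le> real ((2::nat) ^ (m - r)\<^sup>2)"
      by (simp only: of_nat_le_iff Suc_eq_plus1[symmetric] Suc_le_eq)
    then show "real ((m - r)\<^sup>2) * 2 ^ (m - r) + 1 \<le> 2 ^ (m - r)\<^sup>2"
      by simp
  qed (rule Lambda_r_nonneg[OF assms(5,8)])
  finally show ?thesis .
qed

end
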